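(* Let $\ell^\infty\neq0$ be a complex constant. For $k\in\{1,2\}$ let $\Sigma^{(k)}$ be finite disjoint index sets, and for $\alpha\in\Sigma^{(k)}$ let $m_\alpha\ge1$, $z_\alpha\in\mathbb C$ (pairwise distinct within each $\Sigma^{(k)}$), and $\ell^\alpha_{[p]}\in\mathbb C$ ($0\le p\le m_\alpha-1$) with $\ell^\alpha_{[m_\alpha-1]}\neq0$. Let $\chi_k(z)=\sum_{\alpha\in\Sigma^{(k)}}\sum_{p=0}^{m_\alpha-1}\frac{\ell^\alpha_{[p]}}{(z-z_\alpha)^{p+1}}$, $\varphi_k(z)=\chi_k(z)-\ell^\infty$, $M_k=\sum_{\alpha\in\Sigma^{(k)}}m_\alpha$, $M=M_1+M_2$. Assume the zeros of $\varphi_1$, labelled $\zeta^{(1)}_i$, $1\le i\le M_1$, and of $\varphi_2$, labelled $\zeta^{(2)}_i$, $M_1<i\le M$, are simple. For $\gamma\neq0$ let $\varphi_{1\otimes2,\gamma}(z)=\chi_1(z)+\chi_2(z-\gamma^{-1})-\ell^\infty$. Then for $\gamma$ small enough one can order the $M$ zeros $\zeta_i(\gamma)$ of $\varphi_{1\otimes2,\gamma}$ so that $\zeta_i(\gamma)$ is canonically associated with $\zeta^{(k)}_i$ ($k=1$ for $i\le M_1$, $k=2$ for $i>M_1$); more precisely this canonical labelling is the unique one satisfying $\zeta_i(\gamma)=\zeta^{(1)}_i+O(\gamma)$ for $i\in\{1,\dots,M_1\}$ and $\zeta_i(\gamma)=\frac1\gamma+\zeta^{(2)}_i+O(\gamma)$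 for $i\in\{M_1+1,\dots,M\}$. Moreover, for $\gamma$ small enough these zeros are simple. *)

theory Defs
  imports "HOL-Analysis.Analysis" "HOL-Library.Landau_Symbols"
begin

definition chi :: "'a set \<Rightarrow> ('a \<Rightarrow> nat) \<Rightarrow> ('a \<Rightarrow> complex) \<Rightarrow> ('a \<Rightarrow> nat \<Rightarrow> complex)
                    \<Rightarrow> complex \<Rightarrow> complex" where
  "chi S m z l w = (\<Sum>\<alpha>\<in>S. \<Sum>p<m \<alpha>. l \<alpha> p / (w - z \<alpha>) ^ (p + 1))"

definition Mtot :: "'a set \<Rightarrow> ('a \<Rightarrow> nat) \<Rightarrow> nat" where
  "Mtot S m = (\<Sum>\<alpha>\<in>S. m \<alpha>)"

definition phi :: "'a set \<Rightarrow> ('a \<Rightarrow> nat) \<Rightarrow> ('a \<Rightarrow> complex) \<Rightarrow> ('a \<Rightarrow> nat \<Rightarrow> complex)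
                    \<Rightarrow> complex \<Rightarrow> complex \<Rightarrow> complex" where
  "phi S m z l linf w = chi S m z l w - linf"

definition zeros_phi :: "'a set \<Rightarrow> ('a \<Rightarrow> nat) \<Rightarrow> ('a \<Rightarrow> complex) \<Rightarrow> ('a \<Rightarrow> nat \<Rightarrow> complex)
                    \<Rightarrow> complex \<Rightarrow> complex set" where
  "zeros_phi S m z l linf = {w. w \<notin> z ` S \<and> phi S m z l linf w = 0}"

definition phi_tensor :: "'a set \<Rightarrow> 'a set \<Rightarrow> ('a \<Rightarrow> nat) \<Rightarrow> ('a \<Rightarrow> complex)
                    \<Rightarrow> ('a \<Rightarrow> nat \<Rightarrow> complex) \<Rightarrow> complex \<Rightarrow> complex \<Rightarrow> complex \<Rightarrow> complex" where
  "phi_tensor S1 S2 m z l linf \<gamma> w = chi S1 m z l w + chi S2 m z l (w - inverse \<gamma>) - linf"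

definition zeros_tensor :: "'a set \<Rightarrow> 'a set \<Rightarrow> ('a \<Rightarrow> nat) \<Rightarrow> ('a \<Rightarrow> complex)
                    \<Rightarrow> ('a \<Rightarrow> nat \<Rightarrow> complex) \<Rightarrow> complex \<Rightarrow> complex \<Rightarrow> complex set" where
  "zeros_tensor S1 S2 m z l linf \<gamma> =
     {w. w \<notin> z ` S1 \<and> w \<notin> (\<lambda>\<alpha>. z \<alpha> + inverse \<gamma>) ` S2 \<and> phi_tensor S1 S2 m z l linf \<gamma> w = 0}"

end

(*
  For small gamma the poles z alpha + 1/gamma of chi_2 (w - 1/gamma) are far away, so on a fixed
  disc around a simple zero zeta of phi_1 the function phi_tensor is phi_1 plus a holomorphic
  perturbation of size O(gamma).  A simple zero survives such a perturbation: by the minimum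
  modulus principle and the bound |phi_1 w| >= a |w - zeta| the perturbed function has a zero,
  every zero in the disc is O(gamma)-close to zeta, and Cauchy's estimate for the derivative of
  the perturbation keeps it simple.  Replacing gamma by -gamma and translating by 1/gamma exchanges
  the two clusters, which gives a zero near 1/gamma + zeta for every zero zeta of phi_2.
  The M predicted positions separate faster than gamma, so these zeros are distinct, while clearing
  denominators shows that phi_tensor has at most M zeros.  Hence they are all the zeros, and every
  labelling with the same asymptotics agrees with this one for small gamma.
*)

theory Submission
  imports Defs "HOL-Complex_Analysis.Complex_Analysis" "HOL-Computational_Algebra.Polynomial"
begin

lemma zeros_phi_subset_poly_roots:
  assumes fin: "finite S" and linf: "linf \<noteq> 0"
  obtains P :: "complex poly"
  where "P \<noteq> 0" "degree P \<le> Mtot S m" "zeros_phi S m z l linf \<subseteq> {w. poly P w = 0}"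
proof -
  define lin where "lin \<alpha> = [:- z \<alpha>, 1:]" for \<alpha>
  define Q where "Q = (\<Prod>\<alpha>\<in>S. lin \<alpha> ^ m \<alpha>)"
  define P where "P = (\<Sum>\<alpha>\<in>S. \<Sum>p<m \<alpha>. smult (l \<alpha> p) (Q div lin \<alpha> ^ (p + 1))) - smult linf Q"
  have degQ: "degree Q = Mtot S m"
    unfolding Q_def Mtot_def lin_def by (subst degree_prod_sum_eq) (auto simp: degree_linear_power)
  have Q_eq: "Q = Q div lin \<alpha> ^ (p + 1) * lin \<alpha> ^ (p + 1)" if "\<alpha> \<in> S" "p < m \<alpha>" for \<alpha> p
  proof -
    have "lin \<alpha> ^ (p + 1) dvd lin \<alpha> ^ m \<alpha>" using that by (intro le_imp_power_dvd) auto
    also have "\<dots> dvd Q" unfolding Q_def using fin that by (intro dvd_prodI)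
    finally show ?thesis by simp
  qed
  have deg_quot: "degree (Q div lin \<alpha> ^ (p + 1)) < Mtot S m" if "\<alpha> \<in> S" "p < m \<alpha>" for \<alpha> p
  proof -
    have "Q \<noteq> 0" using fin by (auto simp: Q_def lin_def)
    then have "Q div lin \<alpha> ^ (p + 1) \<noteq> 0" using Q_eq[OF that] by (metis mult_zero_left)
    moreover have "lin \<alpha> ^ (p + 1) \<noteq> 0" by (rule power_not_zero) (simp add: lin_def)
    ultimately have "degree Q = degree (Q div lin \<alpha> ^ (p + 1)) + degree (lin \<alpha> ^ (p + 1))"
      using Q_eq[OF that] degree_mult_eq by metis
    then show ?thesis using degQ unfolding lin_def degree_linear_power by simp
  qed
  have poly_quot: "poly (Q div lin \<alpha> ^ (p + 1)) w = poly Q w / (w - z \<alpha>) ^ (p + 1)"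
    if "\<alpha> \<in> S" "p < m \<alpha>" "w \<noteq> z \<alpha>" for \<alpha> p w
    using that by (subst (2) Q_eq[OF that(1,2)]) (simp add: lin_def del: power_Suc)
  have poly_P: "poly P w = poly Q w * phi S m z l linf w" if "w \<notin> z ` S" for w
  proof -
    have "poly P w = (\<Sum>\<alpha>\<in>S. \<Sum>p<m \<alpha>. l \<alpha> p * (poly Q w / (w - z \<alpha>) ^ (p + 1))) - linf * poly Q w"
      unfolding P_def poly_diff poly_sum poly_smult
      using that by (intro arg_cong2[where f = "(-)"] sum.cong refl) (metis lessThan_iff poly_quot rev_image_eqI)
    then show ?thesis by (simp add: phi_def chi_def algebra_simps sum_distrib_left)
  qed
  have "lead_coeff Q = 1" by (simp add: Q_def lin_def lead_coeff_prod lead_coeff_power)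
  then have top_coeff: "coeff P (Mtot S m) = - linf"
    using deg_quot degQ by (simp add: P_def coeff_sum coeff_eq_0)
  show ?thesis
  proof (rule that)
    show "P \<noteq> 0" using top_coeff linf by auto
    show "degree P \<le> Mtot S m"
      unfolding P_def using deg_quot degQ
      by (intro degree_diff_le degree_sum_le fin finite_lessThan)
        (auto intro: order.trans[OF degree_smult_le] less_imp_le)
    show "zeros_phi S m z l linf \<subseteq> {w. poly P w = 0}"
      using poly_P by (auto simp: zeros_phi_def)
  qed
qed

lemma finite_zeros_phi:
  assumes "finite S" "linf \<noteq> 0"
  shows "finite (zeros_phi S m z l linf)"
proof -
  obtain P :: "complex poly" where "P \<noteq> 0" "degree P \<le> Mtot S m"
    and sub: "zeros_phi S m z l linf \<subseteq> {w. poly P w = 0}"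
    by (rule zeros_phi_subset_poly_roots[OF assms])
  then show ?thesis using finite_subset[OF sub poly_roots_finite] by simp
qed

lemma card_zeros_phi_le:
  assumes "finite S" "linf \<noteq> 0"
  shows "card (zeros_phi S m z l linf) \<le> Mtot S m"
proof -
  obtain P :: "complex poly" where P: "P \<noteq> 0" "degree P \<le> Mtot S m"
    and sub: "zeros_phi S m z l linf \<subseteq> {w. poly P w = 0}"
    by (rule zeros_phi_subset_poly_roots[OF assms])
  have "card (zeros_phi S m z l linf) \<le> card {w. poly P w = 0}"
    using card_mono[OF poly_roots_finite[OF P(1)] sub] .
  also have "\<dots> \<le> degree P" using P(1) by (rule card_poly_roots_bound)
  finally show ?thesis using P(2) by simp
qed

lemma zeros_tensor_eq_zeros_phi:
  assumes "finite S1" "finite S2" "S1 \<inter> S2 = {}"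
  shows "zeros_tensor S1 S2 m z l linf \<gamma> =
    zeros_phi (S1 \<union> S2) m (\<lambda>\<alpha>. if \<alpha> \<in> S1 then z \<alpha> else z \<alpha> + inverse \<gamma>) l linf"
proof -
  let ?a = "\<lambda>\<alpha>. if \<alpha> \<in> S1 then z \<alpha> else z \<alpha> + inverse \<gamma>"
  have "?a ` (S1 \<union> S2) = z ` S1 \<union> (\<lambda>\<alpha>. z \<alpha> + inverse \<gamma>) ` S2"
    using assms(3) by (auto simp: image_iff)
  moreover have "chi (S1 \<union> S2) m ?a l w = chi S1 m z l w + chi S2 m z l (w - inverse \<gamma>)" for w
    using assms unfolding chi_def
    by (subst sum.union_disjoint) (auto intro!: arg_cong2[where f = "(+)"] sum.cong simp: algebra_simps)
  ultimately show ?thesis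
    by (auto simp: zeros_tensor_def zeros_phi_def phi_def phi_tensor_def)
qed

lemma Mtot_union:
  assumes "finite S1" "finite S2" "S1 \<inter> S2 = {}"
  shows "Mtot (S1 \<union> S2) m = Mtot S1 m + Mtot S2 m"
  using assms by (simp add: Mtot_def sum.union_disjoint)

lemma finite_zeros_tensor:
  assumes "finite S1" "finite S2" "S1 \<inter> S2 = {}" "linf \<noteq> 0"
  shows "finite (zeros_tensor S1 S2 m z l linf \<gamma>)"
  unfolding zeros_tensor_eq_zeros_phi[OF assms(1-3)] using assms by (intro finite_zeros_phi) auto

lemma card_zeros_tensor_le:
  assumes "finite S1" "finite S2" "S1 \<inter> S2 = {}" "linf \<noteq> 0"
  shows "card (zeros_tensor S1 S2 m z l linf \<gamma>) \<le> Mtot S1 m + Mtot S2 m"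
  unfolding zeros_tensor_eq_zeros_phi[OF assms(1-3)] Mtot_union[OF assms(1-3), symmetric]
  using assms by (intro card_zeros_phi_le) auto

lemma holomorphic_on_chi:
  assumes "h holomorphic_on A" "\<And>u. u \<in> A \<Longrightarrow> h u \<notin> z ` T"
  shows "(\<lambda>u. chi T m z l (h u)) holomorphic_on A"
  unfolding chi_def
  by (intro holomorphic_on_sum holomorphic_on_divide holomorphic_on_power holomorphic_on_diff
      holomorphic_on_const assms(1)) (use assms(2) in \<open>auto simp: image_iff\<close>)

lemma norm_chi_le_at_infinity:
  assumes "finite T"
  obtains K R where "0 \<le> K" "0 < R" "\<forall>\<alpha>\<in>T. norm (z \<alpha>) < R"
    "\<And>v. R \<le> norm v \<Longrightarrow> norm (chi T m z l v) \<le> K / norm v"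
proof
  define Z where "Z = (\<Sum>\<alpha>\<in>T. norm (z \<alpha>))"
  have Z_nonneg: "0 \<le> Z" unfolding Z_def by (simp add: sum_nonneg)
  have z_le: "norm (z \<alpha>) \<le> Z" if "\<alpha> \<in> T" for \<alpha>
    unfolding Z_def using assms that by (intro member_le_sum) auto
  show "\<forall>\<alpha>\<in>T. norm (z \<alpha>) < 2 * Z + 2"
  proof
    fix \<alpha> assume "\<alpha> \<in> T"
    then show "norm (z \<alpha>) < 2 * Z + 2" using z_le[of \<alpha>] norm_ge_zero[of "z \<alpha>"] by linarith
  qed
  show "0 \<le> 2 * (\<Sum>\<alpha>\<in>T. \<Sum>p<m \<alpha>. norm (l \<alpha> p))" by (simp add: sum_nonneg)
  show "0 < 2 * Z + 2" using Z_nonneg by simp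
  fix v :: complex assume v: "2 * Z + 2 \<le> norm v"
  have term_le: "norm (l \<alpha> p / (v - z \<alpha>) ^ (p + 1)) \<le> 2 * norm (l \<alpha> p) / norm v"
    if "\<alpha> \<in> T" for \<alpha> p
  proof -
    have d: "1 \<le> norm (v - z \<alpha>)" "norm v \<le> 2 * norm (v - z \<alpha>)"
      using z_le[OF that] v norm_triangle_ineq2[of v "z \<alpha>"] norm_ge_zero[of "z \<alpha>"] by linarith+
    have "norm (l \<alpha> p / (v - z \<alpha>) ^ (p + 1)) = norm (l \<alpha> p) / norm (v - z \<alpha>) ^ (p + 1)"
      by (simp add: norm_divide norm_power del: power_Suc)
    also have "\<dots> \<le> norm (l \<alpha> p) / norm (v - z \<alpha>)"
    proof (rule divide_left_mono)
      show "norm (v - z \<alpha>) \<le> norm (v - z \<alpha>) ^ (p + 1)" using d(1) by (rule self_le_power) simp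
      show "0 < norm (v - z \<alpha>) ^ (p + 1) * norm (v - z \<alpha>)"
        using d(1) by (intro mult_pos_pos zero_less_power) linarith+
    qed simp
    also have "\<dots> \<le> norm (l \<alpha> p) / (norm v / 2)"
      by (rule frac_le) (use d Z_nonneg v in auto)
    also have "\<dots> = 2 * norm (l \<alpha> p) / norm v"
      by simp
    finally show ?thesis .
  qed
  have "norm (chi T m z l v) \<le> (\<Sum>\<alpha>\<in>T. \<Sum>p<m \<alpha>. norm (l \<alpha> p / (v - z \<alpha>) ^ (p + 1)))"
    unfolding chi_def by (intro order.trans[OF norm_sum] sum_mono norm_sum)
  also have "\<dots> \<le> (\<Sum>\<alpha>\<in>T. \<Sum>p<m \<alpha>. 2 * norm (l \<alpha> p) / norm v)"
    using term_le by (intro sum_mono) auto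
  also have "\<dots> = 2 * (\<Sum>\<alpha>\<in>T. \<Sum>p<m \<alpha>. norm (l \<alpha> p)) / norm v"
    by (simp add: sum_divide_distrib sum_distrib_left)
  finally show "norm (chi T m z l v) \<le> 2 * (\<Sum>\<alpha>\<in>T. \<Sum>p<m \<alpha>. norm (l \<alpha> p)) / norm v" .
qed

lemma eventually_norm_chi_translate_le:
  assumes "finite T" "bounded B"
  obtains K where
    "\<forall>\<^sub>F \<gamma> in at 0. \<forall>u\<in>B. u - inverse \<gamma> \<notin> z ` T \<and> norm (chi T m z l (u - inverse \<gamma>)) \<le> K * norm \<gamma>"
proof -
  obtain K R where K: "0 \<le> K" and "0 < R" and R: "\<forall>\<alpha>\<in>T. norm (z \<alpha>) < R"
    and far: "\<And>v. R \<le> norm v \<Longrightarrow> norm (chi T m z l v) \<le> K / norm v"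
    using norm_chi_le_at_infinity[OF assms(1), where z = z and m = m and l = l] by blast
  obtain b where b: "0 < b" "\<And>u. u \<in> B \<Longrightarrow> norm u \<le> b"
    using assms(2) by (auto simp: bounded_pos)
  have "\<forall>\<^sub>F \<gamma> in at 0. \<forall>u\<in>B. u - inverse \<gamma> \<notin> z ` T \<and> norm (chi T m z l (u - inverse \<gamma>)) \<le> 2 * K * norm \<gamma>"
    unfolding eventually_at
  proof (intro exI[of _ "inverse (2 * b + 2 * R)"] conjI ballI impI)
    show "0 < inverse (2 * b + 2 * R)" using b \<open>0 < R\<close> by simp
    fix \<gamma> :: complex and u assume \<gamma>: "\<gamma> \<noteq> 0 \<and> dist \<gamma> 0 < inverse (2 * b + 2 * R)" and u: "u \<in> B"
    have "inverse (inverse (2 * b + 2 * R)) < inverse (norm \<gamma>)"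
      using \<gamma> by (intro less_imp_inverse_less) auto
    then have big: "2 * b + 2 * R < norm (inverse \<gamma>)" by (simp add: norm_inverse)
    define v where "v = u - inverse \<gamma>"
    have "norm (inverse \<gamma>) - norm u \<le> norm v"
      unfolding v_def by (metis norm_minus_commute norm_triangle_ineq2)
    then have v: "R \<le> norm v" "norm (inverse \<gamma>) / 2 \<le> norm v"
      using b(2)[OF u] big b(1) \<open>0 < R\<close> by linarith+
    show "u - inverse \<gamma> \<notin> z ` T"
    proof
      assume "u - inverse \<gamma> \<in> z ` T"
      then obtain \<alpha> where "\<alpha> \<in> T" "v = z \<alpha>" by (auto simp: v_def)
      then show False using R v(1) by fastforce
    qed
    have "norm (chi T m z l v) \<le> K / norm v" by (rule far[OF v(1)])
    also have "\<dots> \<le> K / (norm (inverse \<gamma>) / 2)" by (rule frac_le) (use K v(2) big b \<open>0 < R\<close> in auto)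
    also have "\<dots> = 2 * K * norm \<gamma>" by (simp add: norm_divide divide_simps)
    finally show "norm (chi T m z l (u - inverse \<gamma>)) \<le> 2 * K * norm \<gamma>" by (simp add: v_def)
  qed
  then show ?thesis by (rule that)
qed

lemma zero_in_ball_if_small_at_centre:
  assumes holF: "F holomorphic_on ball \<zeta> \<rho>" and r: "0 < r" "r < \<rho>"
    and centre: "norm (F \<zeta>) < b" and sphere: "\<And>w. dist \<zeta> w = r \<Longrightarrow> b \<le> norm (F w)"
  shows "\<exists>w\<in>ball \<zeta> r. F w = 0"
proof (rule ccontr)
  assume no_zero: "\<not> (\<exists>w\<in>ball \<zeta> r. F w = 0)"
  have b: "0 < b" using centre by (meson norm_ge_zero order.strict_trans1)
  have nz: "F w \<noteq> 0" if "w \<in> cball \<zeta> r" for w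
  proof (cases "dist \<zeta> w = r")
    case True
    then show ?thesis using sphere[OF True] b by auto
  next
    case False
    then show ?thesis using that no_zero by auto
  qed
  have sub: "cball \<zeta> r \<subseteq> ball \<zeta> \<rho>" using r by auto
  have "norm (inverse (F \<zeta>)) \<le> inverse b"
  proof (rule maximum_modulus_frontier[where f = "\<lambda>w. inverse (F w)" and S = "ball \<zeta> r"])
    show "(\<lambda>w. inverse (F w)) holomorphic_on interior (ball \<zeta> r)"
    proof -
      have "F holomorphic_on ball \<zeta> r" using holF by (rule holomorphic_on_subset) (use sub in auto)
      then show ?thesis using nz by (auto intro!: holomorphic_on_inverse)
    qed
    show "continuous_on (closure (ball \<zeta> r)) (\<lambda>w. inverse (F w))"
      using r(1) sub nz
      by (auto intro!: continuous_on_inverse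
          intro: continuous_on_subset[OF holomorphic_on_imp_continuous_on[OF holF]])
    show "\<zeta> \<in> ball \<zeta> r" using r(1) by simp
  next
    fix w assume "w \<in> frontier (ball \<zeta> r)"
    then have "b \<le> norm (F w)" using sphere r(1) by simp
    then show "norm (inverse (F w)) \<le> inverse b" using b by (simp add: norm_inverse le_imp_inverse_le)
  qed simp
  moreover have "0 < norm (F \<zeta>)" using nz[of \<zeta>] r(1) by simp
  ultimately show False using centre b by (simp add: norm_inverse)
qed

lemma simple_zero_lower_bounds:
  assumes holf: "f holomorphic_on ball \<zeta> \<rho>" and "0 < \<rho>" "f \<zeta> = 0" "deriv f \<zeta> \<noteq> 0"
  obtains a r where "0 < a" "0 < r" "r < \<rho>"
    "\<And>w. w \<in> cball \<zeta> r \<Longrightarrow> a * norm (w - \<zeta>) \<le> norm (f w)"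
    "\<And>w. w \<in> cball \<zeta> r \<Longrightarrow> a \<le> norm (deriv f w)"
proof -
  define A where "A = norm (deriv f \<zeta>)"
  have A: "0 < A" using assms(4) by (simp add: A_def)
  have "continuous_on (ball \<zeta> \<rho>) (deriv f)"
    using holomorphic_deriv[OF holf open_ball] by (rule holomorphic_on_imp_continuous_on)
  then have "isCont (deriv f) \<zeta>"
    using \<open>0 < \<rho>\<close> by (simp add: continuous_on_eq_continuous_at)
  then obtain r1 where r1: "0 < r1" "\<And>w. dist w \<zeta> < r1 \<Longrightarrow> dist (deriv f w) (deriv f \<zeta>) < A / 4"
    using A unfolding continuous_at_eps_delta by (metis divide_pos_pos zero_less_numeral)
  define r where "r = min r1 \<rho> / 2"
  have r: "0 < r" "r < \<rho>" "r < r1" using r1(1) \<open>0 < \<rho>\<close> by (auto simp: r_def)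
  have f'_close: "norm (deriv f w - deriv f \<zeta>) \<le> A / 4" if "w \<in> cball \<zeta> r" for w
  proof -
    have "dist w \<zeta> < r1" using that r by (simp add: dist_commute)
    from r1(2)[OF this] show ?thesis by (simp add: dist_norm)
  qed
  have f_close: "norm (f w - deriv f \<zeta> * (w - \<zeta>)) \<le> A / 4 * norm (w - \<zeta>)" if "w \<in> cball \<zeta> r" for w
  proof -
    have "norm ((f w - deriv f \<zeta> * (w - \<zeta>)) - (f \<zeta> - deriv f \<zeta> * (\<zeta> - \<zeta>))) \<le> A / 4 * norm (w - \<zeta>)"
    proof (rule field_differentiable_bound[OF convex_cball _ f'_close that])
      fix u assume "u \<in> cball \<zeta> r"
      then have "u \<in> ball \<zeta> \<rho>" using r by auto
      then show "((\<lambda>w. f w - deriv f \<zeta> * (w - \<zeta>)) has_field_derivative deriv f u - deriv f \<zeta>)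
          (at u within cball \<zeta> r)"
        using holomorphic_derivI[OF holf open_ball] by (auto intro!: derivative_eq_intros)
    qed (use r in auto)
    then show ?thesis using assms(3) by simp
  qed
  show ?thesis
  proof (rule that[of "3 * A / 4" r])
    fix w assume w: "w \<in> cball \<zeta> r"
    have "norm (deriv f \<zeta> * (w - \<zeta>)) \<le> norm (f w) + norm (f w - deriv f \<zeta> * (w - \<zeta>))"
      using norm_triangle_ineq4[of "f w" "f w - deriv f \<zeta> * (w - \<zeta>)"] by simp
    then show "3 * A / 4 * norm (w - \<zeta>) \<le> norm (f w)"
      using f_close[OF w] by (simp add: norm_mult A_def)
    have "norm (deriv f \<zeta>) \<le> norm (deriv f w) + norm (deriv f w - deriv f \<zeta>)"
      using norm_triangle_ineq4[of "deriv f w" "deriv f w - deriv f \<zeta>"] by simp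
    then show "3 * A / 4 \<le> norm (deriv f w)"
      using f'_close[OF w] by (simp add: A_def)
  qed (use A r in auto)
qed

lemma simple_zero_small_perturbation:
  fixes f g :: "complex \<Rightarrow> complex"
  assumes holf: "f holomorphic_on ball \<zeta> \<rho>" and holg: "g holomorphic_on ball \<zeta> \<rho>"
    and r: "0 < r" "r < \<rho>" and f0: "f \<zeta> = 0"
    and f_lower: "\<And>w. w \<in> cball \<zeta> r \<Longrightarrow> a * norm (w - \<zeta>) \<le> norm (f w)"
    and f'_lower: "\<And>w. w \<in> cball \<zeta> r \<Longrightarrow> a \<le> norm (deriv f w)"
    and g_le: "\<And>u. u \<in> ball \<zeta> \<rho> \<Longrightarrow> norm (g u) \<le> e"
    and small: "2 * e < a * r" "2 * e < a * (\<rho> - r)"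
  shows "\<exists>w\<in>ball \<zeta> r. f w + g w = 0"
    and "\<And>w. w \<in> cball \<zeta> r \<Longrightarrow> f w + g w = 0 \<Longrightarrow>
           a * norm (w - \<zeta>) \<le> e \<and> deriv (\<lambda>u. f u + g u) w \<noteq> 0"
proof -
  have sub: "cball \<zeta> r \<subseteq> ball \<zeta> \<rho>" using r by auto
  have holF: "(\<lambda>u. f u + g u) holomorphic_on ball \<zeta> \<rho>" using holf holg by (rule holomorphic_on_add)
  show "\<exists>w\<in>ball \<zeta> r. f w + g w = 0"
  proof (rule zero_in_ball_if_small_at_centre[OF holF r])
    show "norm (f \<zeta> + g \<zeta>) < a * r - e" using f0 g_le[of \<zeta>] r small(1) by simp
    fix w assume "dist \<zeta> w = r"
    then have w: "w \<in> cball \<zeta> r" "norm (w - \<zeta>) = r" by (auto simp: dist_norm norm_minus_commute)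
    have "norm (f w) - norm (g w) \<le> norm (f w + g w)"
      using norm_diff_ineq[of "f w" "g w"] by simp
    then show "a * r - e \<le> norm (f w + g w)"
      using f_lower[OF w(1)] g_le[of w] sub w by auto
  qed
  fix w assume w: "w \<in> cball \<zeta> r" and zero: "f w + g w = 0"
  have wb: "w \<in> ball \<zeta> \<rho>" using w sub by auto
  have "norm (f w) = norm (g w)" using zero by (metis add_eq_0_iff norm_minus_cancel)
  then have close: "a * norm (w - \<zeta>) \<le> e" using f_lower[OF w] g_le[OF wb] by linarith
  \<comment> \<open>Cauchy's inequality on a disc of radius \<open>s\<close> around \<open>w\<close> inside \<open>ball \<zeta> \<rho>\<close>
    bounds \<open>deriv g w\<close> by \<open>e / s < a\<close>; this is where the second smallness condition is used.\<close>
  define s where "s = (\<rho> - r) / 2"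
  have s: "0 < s" using r by (simp add: s_def)
  have "cball w s \<subseteq> ball \<zeta> \<rho>"
  proof
    fix u assume "u \<in> cball w s"
    then have "dist \<zeta> u \<le> dist \<zeta> w + dist w u" "dist w u \<le> s" "dist \<zeta> w \<le> r"
      using w dist_triangle by auto
    then show "u \<in> ball \<zeta> \<rho>" using r by (simp add: s_def)
  qed
  then have "norm ((deriv ^^ 1) g w) \<le> fact 1 * e / s ^ 1"
    using s g_le by (intro Cauchy_inequality holomorphic_on_subset[OF holg]
        continuous_on_subset[OF holomorphic_on_imp_continuous_on[OF holg]]) (auto simp: dist_norm)
  moreover have "e / s < a" using r small(2) by (simp add: s_def field_simps)
  ultimately have g'_small: "norm (deriv g w) < a" by simp
  have "deriv (\<lambda>u. f u + g u) w = deriv f w + deriv g w"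
    using holf holg wb by (intro deriv_add) (auto intro: holomorphic_on_imp_differentiable_at)
  moreover have "norm (deriv f w) - norm (deriv g w) \<le> norm (deriv f w + deriv g w)"
    using norm_diff_ineq[of "deriv f w" "deriv g w"] by simp
  ultimately have "deriv (\<lambda>u. f u + g u) w \<noteq> 0" using f'_lower[OF w] g'_small by auto
  with close show "a * norm (w - \<zeta>) \<le> e \<and> deriv (\<lambda>u. f u + g u) w \<noteq> 0" by simp
qed

lemma simple_zero_perturbation_eventually:
  fixes f :: "complex \<Rightarrow> complex" and g :: "'b \<Rightarrow> complex \<Rightarrow> complex" and e :: "'b \<Rightarrow> real"
  assumes "0 < \<rho>" and holf: "f holomorphic_on ball \<zeta> \<rho>" and "f \<zeta> = 0" "deriv f \<zeta> \<noteq> 0"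
    and e: "(e \<longlongrightarrow> 0) F"
    and g: "\<forall>\<^sub>F t in F. g t holomorphic_on ball \<zeta> \<rho> \<and> (\<forall>u\<in>ball \<zeta> \<rho>. norm (g t u) \<le> e t)"
  obtains r C where "0 < r" "r < \<rho>"
    "\<forall>\<^sub>F t in F. (\<exists>w\<in>ball \<zeta> r. f w + g t w = 0) \<and>
       (\<forall>w\<in>cball \<zeta> r. f w + g t w = 0 \<longrightarrow> norm (w - \<zeta>) \<le> C * e t \<and> deriv (\<lambda>u. f u + g t u) w \<noteq> 0)"
proof -
  obtain a r where a: "0 < a" and r: "0 < r" "r < \<rho>"
    and f_lower: "\<And>w. w \<in> cball \<zeta> r \<Longrightarrow> a * norm (w - \<zeta>) \<le> norm (f w)"
    and f'_lower: "\<And>w. w \<in> cball \<zeta> r \<Longrightarrow> a \<le> norm (deriv f w)"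
    using simple_zero_lower_bounds[OF holf assms(1,3,4)] by blast
  have "\<forall>\<^sub>F t in F. 2 * e t < a * r" "\<forall>\<^sub>F t in F. 2 * e t < a * (\<rho> - r)"
    using order_tendstoD(2)[OF e, of "a * r / 2"] order_tendstoD(2)[OF e, of "a * (\<rho> - r) / 2"] a r
    by (auto elim: eventually_mono)
  with g have "\<forall>\<^sub>F t in F. (\<exists>w\<in>ball \<zeta> r. f w + g t w = 0) \<and>
       (\<forall>w\<in>cball \<zeta> r. f w + g t w = 0 \<longrightarrow> norm (w - \<zeta>) \<le> inverse a * e t \<and> deriv (\<lambda>u. f u + g t u) w \<noteq> 0)"
  proof eventually_elim
    case (elim t)
    note zero = simple_zero_small_perturbation[OF holf _ r \<open>f \<zeta> = 0\<close> f_lower f'_lower _ elim(2,3)]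
    show ?case
      using zero(1)[of "g t"] zero(2)[of "g t"] elim(1) a by (auto simp: field_simps)
  qed
  with r show ?thesis by (rule that)
qed

definition tracks_zero ::
    "(complex \<Rightarrow> complex set) \<Rightarrow> (complex \<Rightarrow> complex \<Rightarrow> bool) \<Rightarrow> (complex \<Rightarrow> complex) \<Rightarrow> bool" where
  "tracks_zero Z P c \<longleftrightarrow> (\<exists>r>0. \<exists>C. \<forall>\<^sub>F \<gamma> in at 0.
      (\<exists>w\<in>Z \<gamma>. norm (w - c \<gamma>) \<le> r) \<and>
      (\<forall>w\<in>Z \<gamma>. norm (w - c \<gamma>) \<le> r \<longrightarrow> norm (w - c \<gamma>) \<le> C * norm \<gamma> \<and> P \<gamma> w))"

lemma tracks_zeroI:
  assumes "0 < r"
    and "\<forall>\<^sub>F \<gamma> in at 0. (\<exists>w\<in>Z \<gamma>. norm (w - c \<gamma>) \<le> r) \<and>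
      (\<forall>w\<in>Z \<gamma>. norm (w - c \<gamma>) \<le> r \<longrightarrow> norm (w - c \<gamma>) \<le> C * norm \<gamma> \<and> P \<gamma> w)"
  shows "tracks_zero Z P c"
  unfolding tracks_zero_def using assms by blast

lemma tracks_zeroE:
  assumes "tracks_zero Z P c"
  obtains r C where "0 < r"
    "\<forall>\<^sub>F \<gamma> in at 0. (\<exists>w\<in>Z \<gamma>. norm (w - c \<gamma>) \<le> r) \<and>
      (\<forall>w\<in>Z \<gamma>. norm (w - c \<gamma>) \<le> r \<longrightarrow> norm (w - c \<gamma>) \<le> C * norm \<gamma> \<and> P \<gamma> w)"
  using assms unfolding tracks_zero_def by blast

lemma eventually_at_0_reflect:
  fixes Q :: "'a::real_normed_vector \<Rightarrow> bool"
  assumes "\<forall>\<^sub>F x in at 0. Q x"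
  shows "\<forall>\<^sub>F x in at 0. Q (- x)"
proof -
  have "\<forall>\<^sub>F x in filtermap uminus (at 0). Q x" using assms filtermap_at_minus[of "0::'a"] by simp
  then show ?thesis unfolding eventually_filtermap .
qed

lemma tracks_zero_reflect:
  assumes "tracks_zero Z P c"
  shows "tracks_zero (\<lambda>\<gamma>. Z (- \<gamma>)) (\<lambda>\<gamma>. P (- \<gamma>)) (\<lambda>\<gamma>. c (- \<gamma>))"
proof -
  obtain r C where r: "0 < r" and ev: "\<forall>\<^sub>F \<gamma> in at 0. (\<exists>w\<in>Z \<gamma>. norm (w - c \<gamma>) \<le> r) \<and>
      (\<forall>w\<in>Z \<gamma>. norm (w - c \<gamma>) \<le> r \<longrightarrow> norm (w - c \<gamma>) \<le> C * norm \<gamma> \<and> P \<gamma> w)"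
    using assms by (rule tracks_zeroE)
  show ?thesis
    using eventually_at_0_reflect[OF ev] by (intro tracks_zeroI[OF r, where C = C]) simp
qed

lemma tracks_zero_translate:
  assumes "tracks_zero Z P c"
  shows "tracks_zero (\<lambda>\<gamma>. (\<lambda>w. w + d \<gamma>) ` Z \<gamma>) (\<lambda>\<gamma> w. P \<gamma> (w - d \<gamma>)) (\<lambda>\<gamma>. c \<gamma> + d \<gamma>)"
proof -
  obtain r C where r: "0 < r" and ev: "\<forall>\<^sub>F \<gamma> in at 0. (\<exists>w\<in>Z \<gamma>. norm (w - c \<gamma>) \<le> r) \<and>
      (\<forall>w\<in>Z \<gamma>. norm (w - c \<gamma>) \<le> r \<longrightarrow> norm (w - c \<gamma>) \<le> C * norm \<gamma> \<and> P \<gamma> w)"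
    using assms by (rule tracks_zeroE)
  show ?thesis
  proof (rule tracks_zeroI[OF r, where C = C])
    show "\<forall>\<^sub>F \<gamma> in at 0. (\<exists>w\<in>(\<lambda>w. w + d \<gamma>) ` Z \<gamma>. norm (w - (c \<gamma> + d \<gamma>)) \<le> r) \<and>
      (\<forall>w\<in>(\<lambda>w. w + d \<gamma>) ` Z \<gamma>. norm (w - (c \<gamma> + d \<gamma>)) \<le> r \<longrightarrow>
         norm (w - (c \<gamma> + d \<gamma>)) \<le> C * norm \<gamma> \<and> P \<gamma> (w - d \<gamma>))"
      using ev
    proof eventually_elim
      case (elim \<gamma>)
      then obtain w where "w \<in> Z \<gamma>" "norm (w - c \<gamma>) \<le> r" by blast
      then have "w + d \<gamma> \<in> (\<lambda>w. w + d \<gamma>) ` Z \<gamma> \<and> norm (w + d \<gamma> - (c \<gamma> + d \<gamma>)) \<le> r" by simp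
      with elim show ?case by force
    qed
  qed
qed

lemma phi_holomorphic_near_zero:
  assumes "finite S" "\<zeta> \<in> zeros_phi S m z l linf"
  obtains \<rho> where "0 < \<rho>" "ball \<zeta> \<rho> \<subseteq> - z ` S" "phi S m z l linf holomorphic_on ball \<zeta> \<rho>"
proof -
  have "open (- z ` S)" using assms(1) by (simp add: finite_imp_closed open_Compl)
  moreover have "\<zeta> \<in> - z ` S" using assms(2) by (simp add: zeros_phi_def)
  ultimately obtain \<rho> where \<rho>: "0 < \<rho>" "ball \<zeta> \<rho> \<subseteq> - z ` S"
    using open_contains_ball by blast
  have "phi S m z l linf = (\<lambda>w. chi S m z l w - linf)"
    by (simp add: fun_eq_iff phi_def)
  moreover have "(\<lambda>w. chi S m z l w - linf) holomorphic_on ball \<zeta> \<rho>"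
    using \<rho>(2) by (intro holomorphic_on_diff holomorphic_on_chi holomorphic_on_id holomorphic_on_const) auto
  ultimately show ?thesis using \<rho> by (intro that) simp_all
qed

lemma phi_tensor_eq:
  "phi_tensor S1 S2 m z l linf \<gamma> = (\<lambda>w. phi S1 m z l linf w + chi S2 m z l (w - inverse \<gamma>))"
  by (simp add: fun_eq_iff phi_tensor_def phi_def)

lemma mem_zeros_tensor_iff:
  assumes "w \<notin> z ` S1" "w - inverse \<gamma> \<notin> z ` S2"
  shows "w \<in> zeros_tensor S1 S2 m z l linf \<gamma> \<longleftrightarrow>
    phi S1 m z l linf w + chi S2 m z l (w - inverse \<gamma>) = 0"
proof -
  have "w \<notin> (\<lambda>\<alpha>. z \<alpha> + inverse \<gamma>) ` S2" using assms(2) by force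
  with assms(1) show ?thesis by (simp add: zeros_tensor_def phi_tensor_eq)
qed

lemma tracks_zero_tensor_first:
  assumes fin: "finite S1" "finite S2" and \<zeta>: "\<zeta> \<in> zeros_phi S1 m z l linf"
    and simple: "deriv (phi S1 m z l linf) \<zeta> \<noteq> 0"
  shows "tracks_zero (zeros_tensor S1 S2 m z l linf)
    (\<lambda>\<gamma> w. deriv (phi_tensor S1 S2 m z l linf \<gamma>) w \<noteq> 0) (\<lambda>_. \<zeta>)"
proof -
  obtain \<rho> where \<rho>: "0 < \<rho>" "ball \<zeta> \<rho> \<subseteq> - z ` S1"
    and holf: "phi S1 m z l linf holomorphic_on ball \<zeta> \<rho>"
    by (rule phi_holomorphic_near_zero[OF fin(1) \<zeta>])
  have f0: "phi S1 m z l linf \<zeta> = 0" using \<zeta> by (simp add: zeros_phi_def)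
  obtain K where far: "\<forall>\<^sub>F \<gamma> in at 0. \<forall>u\<in>ball \<zeta> \<rho>.
      u - inverse \<gamma> \<notin> z ` S2 \<and> norm (chi S2 m z l (u - inverse \<gamma>)) \<le> K * norm \<gamma>"
    using eventually_norm_chi_translate_le[OF fin(2) bounded_ball, where m = m and z = z and l = l]
    by blast
  have g: "\<forall>\<^sub>F \<gamma> in at 0. (\<lambda>u. chi S2 m z l (u - inverse \<gamma>)) holomorphic_on ball \<zeta> \<rho> \<and>
      (\<forall>u\<in>ball \<zeta> \<rho>. norm (chi S2 m z l (u - inverse \<gamma>)) \<le> K * norm \<gamma>)"
    using far by eventually_elim
      (auto intro!: holomorphic_on_chi holomorphic_on_diff holomorphic_on_id holomorphic_on_const)
  have "((\<lambda>\<gamma>::complex. K * norm \<gamma>) \<longlongrightarrow> K * norm (0::complex)) (at 0)"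
    by (intro tendsto_intros)
  then have e: "((\<lambda>\<gamma>::complex. K * norm \<gamma>) \<longlongrightarrow> 0) (at 0)" by simp
  obtain r C where r: "0 < r" "r < \<rho>"
    and near: "\<forall>\<^sub>F \<gamma> in at 0. (\<exists>w\<in>ball \<zeta> r. phi S1 m z l linf w + chi S2 m z l (w - inverse \<gamma>) = 0) \<and>
       (\<forall>w\<in>cball \<zeta> r. phi S1 m z l linf w + chi S2 m z l (w - inverse \<gamma>) = 0 \<longrightarrow>
          norm (w - \<zeta>) \<le> C * (K * norm \<gamma>) \<and>
          deriv (\<lambda>u. phi S1 m z l linf u + chi S2 m z l (u - inverse \<gamma>)) w \<noteq> 0)"
    using simple_zero_perturbation_eventually[OF \<rho>(1) holf f0 simple e g] by blast
  have cball_iff: "w \<in> cball \<zeta> r \<longleftrightarrow> norm (w - \<zeta>) \<le> r" for w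
    by (simp add: dist_norm norm_minus_commute)
  have "\<forall>\<^sub>F \<gamma> in at 0. (\<exists>w\<in>zeros_tensor S1 S2 m z l linf \<gamma>. norm (w - \<zeta>) \<le> r) \<and>
      (\<forall>w\<in>zeros_tensor S1 S2 m z l linf \<gamma>. norm (w - \<zeta>) \<le> r \<longrightarrow>
         norm (w - \<zeta>) \<le> C * K * norm \<gamma> \<and> deriv (phi_tensor S1 S2 m z l linf \<gamma>) w \<noteq> 0)"
    using far near
  proof eventually_elim
    case (elim \<gamma>)
    have zeros_iff: "w \<in> zeros_tensor S1 S2 m z l linf \<gamma> \<longleftrightarrow>
        phi S1 m z l linf w + chi S2 m z l (w - inverse \<gamma>) = 0" if "norm (w - \<zeta>) \<le> r" for w
    proof -
      have "w \<in> ball \<zeta> \<rho>" using that r by (simp add: dist_norm norm_minus_commute)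
      then show ?thesis using \<rho>(2) elim(1) by (intro mem_zeros_tensor_iff) auto
    qed
    from elim(2) obtain w where "w \<in> ball \<zeta> r" "phi S1 m z l linf w + chi S2 m z l (w - inverse \<gamma>) = 0"
      by blast
    then have "w \<in> zeros_tensor S1 S2 m z l linf \<gamma> \<and> norm (w - \<zeta>) \<le> r"
      using zeros_iff cball_iff[of w] by auto
    moreover have "norm (w - \<zeta>) \<le> C * K * norm \<gamma> \<and> deriv (phi_tensor S1 S2 m z l linf \<gamma>) w \<noteq> 0"
      if "w \<in> zeros_tensor S1 S2 m z l linf \<gamma>" "norm (w - \<zeta>) \<le> r" for w
      using that elim(2) zeros_iff cball_iff by (simp add: phi_tensor_eq mult.assoc)
    ultimately show ?case by blast
  qed
  with r(1) show ?thesis by (rule tracks_zeroI)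
qed

lemma phi_tensor_swap:
  "phi_tensor S1 S2 m z l linf \<gamma> w = phi_tensor S2 S1 m z l linf (- \<gamma>) (w - inverse \<gamma>)"
  by (simp add: phi_tensor_def algebra_simps)

lemma translate_image_iff:
  fixes c :: "'a::ab_group_add"
  shows "w \<in> (\<lambda>u. u + c) ` A \<longleftrightarrow> w - c \<in> A"
proof
  assume "w - c \<in> A"
  then show "w \<in> (\<lambda>u. u + c) ` A" by (rule rev_image_eqI) simp
qed auto

lemma zeros_tensor_swap:
  "zeros_tensor S1 S2 m z l linf \<gamma> = (\<lambda>u. u + inverse \<gamma>) ` zeros_tensor S2 S1 m z l linf (- \<gamma>)"
proof -
  have shift: "w \<in> zeros_tensor S1 S2 m z l linf \<gamma> \<longleftrightarrow>
      w - inverse \<gamma> \<in> zeros_tensor S2 S1 m z l linf (- \<gamma>)" for w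
  proof -
    have poles2: "w - inverse \<gamma> \<in> z ` S2 \<longleftrightarrow> w \<in> (\<lambda>\<alpha>. z \<alpha> + inverse \<gamma>) ` S2"
      by (simp add: image_iff diff_eq_eq)
    have poles1: "w - inverse \<gamma> \<in> (\<lambda>\<alpha>. z \<alpha> + inverse (- \<gamma>)) ` S1 \<longleftrightarrow> w \<in> z ` S1"
      by (simp add: image_iff)
    show ?thesis
      unfolding zeros_tensor_def mem_Collect_eq phi_tensor_swap[of S1 S2 m z l linf \<gamma> w] poles1 poles2
      by blast
  qed
  show ?thesis
    by (rule set_eqI) (simp only: shift translate_image_iff)
qed

lemma deriv_translate: "deriv (\<lambda>w. f (w - c)) x = deriv f (x - c)"
  using DERIV_shift[of f _ x "- c"] by (simp add: deriv_def)

lemma tracks_zero_tensor_second: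
  assumes "finite S1" "finite S2" "\<zeta> \<in> zeros_phi S2 m z l linf"
    and "deriv (phi S2 m z l linf) \<zeta> \<noteq> 0"
  shows "tracks_zero (zeros_tensor S1 S2 m z l linf)
    (\<lambda>\<gamma> w. deriv (phi_tensor S1 S2 m z l linf \<gamma>) w \<noteq> 0) (\<lambda>\<gamma>. \<zeta> + inverse \<gamma>)"
proof -
  \<comment> \<open>By \<open>phi_tensor_swap\<close> the second cluster at \<open>\<gamma>\<close> is the first cluster of the swapped
    problem at \<open>-\<gamma>\<close>, translated by \<open>1/\<gamma>\<close>.\<close>
  have "tracks_zero (\<lambda>\<gamma>. (\<lambda>w. w + inverse \<gamma>) ` zeros_tensor S2 S1 m z l linf (- \<gamma>))
      (\<lambda>\<gamma> w. deriv (phi_tensor S2 S1 m z l linf (- \<gamma>)) (w - inverse \<gamma>) \<noteq> 0) (\<lambda>\<gamma>. \<zeta> + inverse \<gamma>)"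
    using tracks_zero_translate[OF tracks_zero_reflect[OF tracks_zero_tensor_first[OF assms(2,1,3,4)]],
        where d = inverse] by simp
  moreover have "(\<lambda>\<gamma>. (\<lambda>w. w + inverse \<gamma>) ` zeros_tensor S2 S1 m z l linf (- \<gamma>)) =
      zeros_tensor S1 S2 m z l linf"
    by (rule ext) (rule zeros_tensor_swap[symmetric])
  moreover have "deriv (phi_tensor S2 S1 m z l linf (- \<gamma>)) (w - inverse \<gamma>) =
      deriv (phi_tensor S1 S2 m z l linf \<gamma>) w" for \<gamma> w
  proof -
    have "phi_tensor S1 S2 m z l linf \<gamma> = (\<lambda>w. phi_tensor S2 S1 m z l linf (- \<gamma>) (w - inverse \<gamma>))"
      by (simp add: fun_eq_iff phi_tensor_swap[of S1 S2])
    then show ?thesis by (simp add: deriv_translate)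
  qed
  ultimately show ?thesis by simp
qed

lemma close_labels_eq_imp_index_eq:
  fixes c \<zeta> \<zeta>' :: "complex \<Rightarrow> 'i \<Rightarrow> complex"
  assumes fin: "finite I"
    and sep: "\<And>i j. i \<in> I \<Longrightarrow> j \<in> I \<Longrightarrow> i \<noteq> j \<Longrightarrow> (\<lambda>\<gamma>. \<gamma>) \<in> o[at 0](\<lambda>\<gamma>. c \<gamma> i - c \<gamma> j)"
    and close: "\<And>i. i \<in> I \<Longrightarrow> (\<lambda>\<gamma>. \<zeta> \<gamma> i - c \<gamma> i) \<in> O[at 0](\<lambda>\<gamma>. \<gamma>)"
    and close': "\<And>i. i \<in> I \<Longrightarrow> (\<lambda>\<gamma>. \<zeta>' \<gamma> i - c \<gamma> i) \<in> O[at 0](\<lambda>\<gamma>. \<gamma>)"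
  shows "\<forall>\<^sub>F \<gamma> in at 0. \<forall>i\<in>I. \<forall>j\<in>I. \<zeta>' \<gamma> i = \<zeta> \<gamma> j \<longrightarrow> i = j"
proof -
  have pair: "\<forall>\<^sub>F \<gamma> in at 0. \<zeta>' \<gamma> i = \<zeta> \<gamma> j \<longrightarrow> i = j" if ij: "i \<in> I" "j \<in> I" for i j
  proof (cases "i = j")
    case False
    have "(\<lambda>\<gamma>. (\<zeta>' \<gamma> i - c \<gamma> i) - (\<zeta> \<gamma> j - c \<gamma> j)) \<in> O[at 0](\<lambda>\<gamma>. \<gamma>)"
      using close'[OF ij(1)] close[OF ij(2)] by (rule sum_in_bigo)
    then have "(\<lambda>\<gamma>. (\<zeta>' \<gamma> i - c \<gamma> i) - (\<zeta> \<gamma> j - c \<gamma> j)) \<in> o[at 0](\<lambda>\<gamma>. c \<gamma> i - c \<gamma> j)"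
      using sep[OF ij False] by (rule landau_o.big_small_trans)
    then have "\<forall>\<^sub>F \<gamma> in at 0.
        norm ((\<zeta>' \<gamma> i - c \<gamma> i) - (\<zeta> \<gamma> j - c \<gamma> j)) \<le> 1 / 2 * norm (c \<gamma> i - c \<gamma> j)"
      by (rule landau_o.smallD) simp
    moreover have "\<forall>\<^sub>F \<gamma> in at 0. norm \<gamma> \<le> 1 * norm (c \<gamma> i - c \<gamma> j)"
      using sep[OF ij False] by (rule landau_o.smallD) simp
    moreover have "\<forall>\<^sub>F \<gamma> in at (0::complex). \<gamma> \<noteq> 0" by (rule eventually_neq_at_within)
    ultimately show ?thesis
    proof eventually_elim
      case (elim \<gamma>)
      show ?case
      proof
        assume "\<zeta>' \<gamma> i = \<zeta> \<gamma> j"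
        then have "(\<zeta>' \<gamma> i - c \<gamma> i) - (\<zeta> \<gamma> j - c \<gamma> j) = - (c \<gamma> i - c \<gamma> j)" by simp
        then have "norm ((\<zeta>' \<gamma> i - c \<gamma> i) - (\<zeta> \<gamma> j - c \<gamma> j)) = norm (c \<gamma> i - c \<gamma> j)"
          by (simp only: norm_minus_cancel)
        with elim(1) have "norm (c \<gamma> i - c \<gamma> j) \<le> 0" by linarith
        with elim(2,3) show "i = j" by simp
      qed
    qed
  qed simp
  show ?thesis by (intro eventually_ball_finite fin ballI pair)
qed

lemma tracked_zeros_choice:
  fixes Z :: "complex \<Rightarrow> complex set" and c :: "complex \<Rightarrow> 'i \<Rightarrow> complex"
  assumes fin: "finite I" and track: "\<And>i. i \<in> I \<Longrightarrow> tracks_zero Z P (\<lambda>\<gamma>. c \<gamma> i)"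
  obtains \<zeta> where "\<forall>\<^sub>F \<gamma> in at 0. \<forall>i\<in>I. \<zeta> \<gamma> i \<in> Z \<gamma> \<and> P \<gamma> (\<zeta> \<gamma> i)"
    "\<forall>i\<in>I. (\<lambda>\<gamma>. \<zeta> \<gamma> i - c \<gamma> i) \<in> O[at 0](\<lambda>\<gamma>. \<gamma>)"
proof -
  define Q where "Q i r C \<gamma> \<longleftrightarrow> (\<exists>w\<in>Z \<gamma>. norm (w - c \<gamma> i) \<le> r) \<and>
      (\<forall>w\<in>Z \<gamma>. norm (w - c \<gamma> i) \<le> r \<longrightarrow> norm (w - c \<gamma> i) \<le> C * norm \<gamma> \<and> P \<gamma> w)" for i r C \<gamma>
  have "\<forall>i\<in>I. \<exists>r C. \<forall>\<^sub>F \<gamma> in at 0. Q i r C \<gamma>"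
  proof
    fix i assume "i \<in> I"
    obtain r C where "0 < r" "\<forall>\<^sub>F \<gamma> in at 0. (\<exists>w\<in>Z \<gamma>. norm (w - c \<gamma> i) \<le> r) \<and>
        (\<forall>w\<in>Z \<gamma>. norm (w - c \<gamma> i) \<le> r \<longrightarrow> norm (w - c \<gamma> i) \<le> C * norm \<gamma> \<and> P \<gamma> w)"
      by (rule tracks_zeroE[OF track[OF \<open>i \<in> I\<close>]])
    then show "\<exists>r C. \<forall>\<^sub>F \<gamma> in at 0. Q i r C \<gamma>" unfolding Q_def by blast
  qed
  from bchoice[OF this] obtain r where "\<forall>i\<in>I. \<exists>C. \<forall>\<^sub>F \<gamma> in at 0. Q i (r i) C \<gamma>"
    by blast
  from bchoice[OF this] obtain C where "\<forall>i\<in>I. \<forall>\<^sub>F \<gamma> in at 0. Q i (r i) (C i) \<gamma>"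
    by blast
  then have ev: "\<forall>\<^sub>F \<gamma> in at 0. \<forall>i\<in>I. Q i (r i) (C i) \<gamma>"
    using fin by (rule eventually_ball_finite[rotated])
  define \<zeta> where "\<zeta> \<gamma> i = (SOME w. w \<in> Z \<gamma> \<and> norm (w - c \<gamma> i) \<le> r i)" for \<gamma> i
  have \<zeta>: "\<zeta> \<gamma> i \<in> Z \<gamma> \<and> norm (\<zeta> \<gamma> i - c \<gamma> i) \<le> r i"
    if "\<forall>i\<in>I. Q i (r i) (C i) \<gamma>" "i \<in> I" for \<gamma> i
    unfolding \<zeta>_def by (rule someI_ex) (use that in \<open>unfold Q_def, blast\<close>)
  have close: "\<forall>i\<in>I. (\<lambda>\<gamma>. \<zeta> \<gamma> i - c \<gamma> i) \<in> O[at 0](\<lambda>\<gamma>. \<gamma>)"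
  proof
    fix i assume i: "i \<in> I"
    show "(\<lambda>\<gamma>. \<zeta> \<gamma> i - c \<gamma> i) \<in> O[at 0](\<lambda>\<gamma>. \<gamma>)"
    proof (rule bigoI)
      show "\<forall>\<^sub>F \<gamma> in at 0. norm (\<zeta> \<gamma> i - c \<gamma> i) \<le> C i * norm \<gamma>"
        using ev
      proof eventually_elim
        case (elim \<gamma>)
        have "\<zeta> \<gamma> i \<in> Z \<gamma>" "norm (\<zeta> \<gamma> i - c \<gamma> i) \<le> r i" using \<zeta>[OF elim i] by simp_all
        moreover have "Q i (r i) (C i) \<gamma>" using elim i by blast
        ultimately show ?case unfolding Q_def by blast
      qed
    qed
  qed
  have "\<forall>\<^sub>F \<gamma> in at 0. \<forall>i\<in>I. \<zeta> \<gamma> i \<in> Z \<gamma> \<and> P \<gamma> (\<zeta> \<gamma> i)"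
    using ev
  proof eventually_elim
    case (elim \<gamma>)
    show ?case
    proof
      fix i assume i: "i \<in> I"
      have "\<zeta> \<gamma> i \<in> Z \<gamma>" "norm (\<zeta> \<gamma> i - c \<gamma> i) \<le> r i" using \<zeta>[OF elim i] by simp_all
      moreover have "Q i (r i) (C i) \<gamma>" using elim i by blast
      ultimately show "\<zeta> \<gamma> i \<in> Z \<gamma> \<and> P \<gamma> (\<zeta> \<gamma> i)" unfolding Q_def by blast
    qed
  qed
  from this close show ?thesis by (rule that)
qed

lemma tracked_zeros_labelling:
  fixes Z :: "complex \<Rightarrow> complex set" and c :: "complex \<Rightarrow> 'i \<Rightarrow> complex"
  assumes fin: "finite I"
    and sep: "\<And>i j. i \<in> I \<Longrightarrow> j \<in> I \<Longrightarrow> i \<noteq> j \<Longrightarrow> (\<lambda>\<gamma>. \<gamma>) \<in> o[at 0](\<lambda>\<gamma>. c \<gamma> i - c \<gamma> j)"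
    and track: "\<And>i. i \<in> I \<Longrightarrow> tracks_zero Z P (\<lambda>\<gamma>. c \<gamma> i)"
    and count: "\<forall>\<^sub>F \<gamma> in at 0. finite (Z \<gamma>) \<and> card (Z \<gamma>) \<le> card I"
  obtains \<zeta> where "\<forall>\<^sub>F \<gamma> in at 0. bij_betw (\<zeta> \<gamma>) I (Z \<gamma>) \<and> (\<forall>w\<in>Z \<gamma>. P \<gamma> w)"
    "\<forall>i\<in>I. (\<lambda>\<gamma>. \<zeta> \<gamma> i - c \<gamma> i) \<in> O[at 0](\<lambda>\<gamma>. \<gamma>)"
proof -
  obtain \<zeta> where mem: "\<forall>\<^sub>F \<gamma> in at 0. \<forall>i\<in>I. \<zeta> \<gamma> i \<in> Z \<gamma> \<and> P \<gamma> (\<zeta> \<gamma> i)"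
    and close: "\<forall>i\<in>I. (\<lambda>\<gamma>. \<zeta> \<gamma> i - c \<gamma> i) \<in> O[at 0](\<lambda>\<gamma>. \<gamma>)"
    by (rule tracked_zeros_choice[where c = c, OF fin track])
  have inj: "\<forall>\<^sub>F \<gamma> in at 0. \<forall>i\<in>I. \<forall>j\<in>I. \<zeta> \<gamma> i = \<zeta> \<gamma> j \<longrightarrow> i = j"
    using close by (intro close_labels_eq_imp_index_eq[where c = c] fin sep) auto
  have "\<forall>\<^sub>F \<gamma> in at 0. bij_betw (\<zeta> \<gamma>) I (Z \<gamma>) \<and> (\<forall>w\<in>Z \<gamma>. P \<gamma> w)"
    using mem inj count
  proof eventually_elim
    case (elim \<gamma>)
    have inj: "inj_on (\<zeta> \<gamma>) I" unfolding inj_on_def using elim(2) by blast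
    have sub: "\<zeta> \<gamma> ` I \<subseteq> Z \<gamma>" using elim(1) by blast
    have "card (\<zeta> \<gamma> ` I) = card (Z \<gamma>)"
      using card_mono[OF conjunct1[OF elim(3)] sub] conjunct2[OF elim(3)] card_image[OF inj] by linarith
    then have onto: "\<zeta> \<gamma> ` I = Z \<gamma>"
      by (rule card_subset_eq[OF conjunct1[OF elim(3)] sub])
    have "P \<gamma> w" if "w \<in> Z \<gamma>" for w
    proof -
      have "w \<in> \<zeta> \<gamma> ` I" using that onto by simp
      then obtain i where "i \<in> I" "w = \<zeta> \<gamma> i" by blast
      then show ?thesis using bspec[OF elim(1)] by simp
    qed
    then show ?case using inj onto by (simp add: bij_betw_def)
  qed
  from this close show ?thesis by (rule that)
qed

lemma tracked_zeros_labelling_unique: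
  fixes Z :: "complex \<Rightarrow> complex set" and c \<zeta> \<zeta>' :: "complex \<Rightarrow> 'i \<Rightarrow> complex"
  assumes fin: "finite I"
    and sep: "\<And>i j. i \<in> I \<Longrightarrow> j \<in> I \<Longrightarrow> i \<noteq> j \<Longrightarrow> (\<lambda>\<gamma>. \<gamma>) \<in> o[at 0](\<lambda>\<gamma>. c \<gamma> i - c \<gamma> j)"
    and bij: "\<forall>\<^sub>F \<gamma> in at 0. bij_betw (\<zeta> \<gamma>) I (Z \<gamma>)"
    and bij': "\<forall>\<^sub>F \<gamma> in at 0. bij_betw (\<zeta>' \<gamma>) I (Z \<gamma>)"
    and close: "\<forall>i\<in>I. (\<lambda>\<gamma>. \<zeta> \<gamma> i - c \<gamma> i) \<in> O[at 0](\<lambda>\<gamma>. \<gamma>)"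
    and close': "\<forall>i\<in>I. (\<lambda>\<gamma>. \<zeta>' \<gamma> i - c \<gamma> i) \<in> O[at 0](\<lambda>\<gamma>. \<gamma>)"
  shows "\<forall>\<^sub>F \<gamma> in at 0. \<forall>i\<in>I. \<zeta>' \<gamma> i = \<zeta> \<gamma> i"
proof -
  have "\<forall>\<^sub>F \<gamma> in at 0. \<forall>i\<in>I. \<forall>j\<in>I. \<zeta>' \<gamma> i = \<zeta> \<gamma> j \<longrightarrow> i = j"
    using close close' by (intro close_labels_eq_imp_index_eq[where c = c] fin sep) auto
  with bij bij' show ?thesis
  proof eventually_elim
    case (elim \<gamma>)
    show ?case
    proof
      fix i assume i: "i \<in> I"
      have "\<zeta>' \<gamma> i \<in> \<zeta> \<gamma> ` I"
        using bij_betw_apply[OF elim(2) i] elim(1) by (simp add: bij_betw_def)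
      then obtain j where "j \<in> I" "\<zeta>' \<gamma> i = \<zeta> \<gamma> j" by blast
      with elim(3) i show "\<zeta>' \<gamma> i = \<zeta> \<gamma> i" by blast
    qed
  qed
qed

lemma ident_smallo_const:
  assumes "d \<noteq> 0"
  shows "(\<lambda>\<gamma>::complex. \<gamma>) \<in> o[at 0](\<lambda>_. d)"
proof (rule smalloI_tendsto)
  have "((\<lambda>\<gamma>::complex. \<gamma> / d) \<longlongrightarrow> 0 / d) (at 0)" by (intro tendsto_intros assms)
  then show "((\<lambda>\<gamma>::complex. \<gamma> / d) \<longlongrightarrow> 0) (at 0)" by simp
  show "\<forall>\<^sub>F \<gamma> in at 0. d \<noteq> 0" using assms by simp
qed

lemma ident_smallo_shifted_inverse: "(\<lambda>\<gamma>::complex. \<gamma>) \<in> o[at 0](\<lambda>\<gamma>. d + inverse \<gamma>)"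
proof (rule smalloI_tendsto)
  have quot: "\<gamma> / (d + inverse \<gamma>) = \<gamma> * \<gamma> / (d * \<gamma> + 1)" if "\<gamma> \<noteq> 0" for \<gamma> :: complex
  proof -
    have "d + inverse \<gamma> = (d * \<gamma> + 1) / \<gamma>" using that by (simp add: field_simps)
    then show ?thesis by simp
  qed
  have "((\<lambda>\<gamma>::complex. \<gamma> * \<gamma> / (d * \<gamma> + 1)) \<longlongrightarrow> 0 * 0 / (d * 0 + 1)) (at 0)"
    by (intro tendsto_intros) simp_all
  then have lim: "((\<lambda>\<gamma>::complex. \<gamma> * \<gamma> / (d * \<gamma> + 1)) \<longlongrightarrow> 0) (at 0)" by simp
  have "\<forall>\<^sub>F \<gamma> in at 0. \<gamma> * \<gamma> / (d * \<gamma> + 1) = \<gamma> / (d + inverse \<gamma>)"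
    using eventually_neq_at_within[of 0 0 UNIV] by eventually_elim (simp add: quot)
  from tendsto_cong[OF this] lim show "((\<lambda>\<gamma>. \<gamma> / (d + inverse \<gamma>)) \<longlongrightarrow> 0) (at 0)" by simp
  have "((\<lambda>\<gamma>::complex. d * \<gamma> + 1) \<longlongrightarrow> d * 0 + 1) (at 0)" by (intro tendsto_intros)
  then have "\<forall>\<^sub>F \<gamma> in at 0. d * \<gamma> + 1 \<noteq> 0" by (rule tendsto_imp_eventually_ne) simp
  with eventually_neq_at_within[of 0 0 UNIV]
  show "\<forall>\<^sub>F \<gamma> in at 0. d + inverse \<gamma> \<noteq> 0"
    by eventually_elim (simp add: field_simps)
qed

definition tensor_centre :: "nat \<Rightarrow> (nat \<Rightarrow> complex) \<Rightarrow> complex \<Rightarrow> nat \<Rightarrow> complex" where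
  "tensor_centre k a \<gamma> i = (if i \<le> k then a i else a i + inverse \<gamma>)"

lemma tensor_centres_separate:
  assumes inj: "inj_on a {1..k}" "inj_on a {k + 1..k + n}"
    and ij: "i \<in> {1..k + n}" "j \<in> {1..k + n}" "i \<noteq> j"
  shows "(\<lambda>\<gamma>. \<gamma>) \<in> o[at 0](\<lambda>\<gamma>. tensor_centre k a \<gamma> i - tensor_centre k a \<gamma> j)"
proof (cases "i \<le> k"; cases "j \<le> k")
  assume "i \<le> k" "j \<le> k"
  then have "a i \<noteq> a j" using inj(1) ij by (auto dest: inj_onD)
  with \<open>i \<le> k\<close> \<open>j \<le> k\<close> show ?thesis by (simp add: tensor_centre_def ident_smallo_const)
next
  assume "\<not> i \<le> k" "\<not> j \<le> k"
  then have "a i \<noteq> a j" using inj(2) ij by (auto dest: inj_onD)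
  with \<open>\<not> i \<le> k\<close> \<open>\<not> j \<le> k\<close> show ?thesis by (simp add: tensor_centre_def ident_smallo_const)
next
  assume "i \<le> k" "\<not> j \<le> k"
  then have "(\<lambda>\<gamma>. tensor_centre k a \<gamma> i - tensor_centre k a \<gamma> j) = (\<lambda>\<gamma>. - ((a j - a i) + inverse \<gamma>))"
    by (simp add: tensor_centre_def fun_eq_iff)
  then show ?thesis by (simp only: landau_o.small.uminus ident_smallo_shifted_inverse)
next
  assume "\<not> i \<le> k" "j \<le> k"
  then have "(\<lambda>\<gamma>. tensor_centre k a \<gamma> i - tensor_centre k a \<gamma> j) = (\<lambda>\<gamma>. (a i - a j) + inverse \<gamma>)"
    by (simp add: tensor_centre_def fun_eq_iff)
  then show ?thesis by (simp only: ident_smallo_shifted_inverse)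
qed

lemma tensor_centre_bigO_iff:
  "(\<forall>i\<in>{1..k + n}. (\<lambda>\<gamma>. f \<gamma> i - tensor_centre k a \<gamma> i) \<in> O[at 0](\<lambda>\<gamma>. \<gamma>)) \<longleftrightarrow>
     (\<forall>i\<in>{1..k}. (\<lambda>\<gamma>. f \<gamma> i - a i) \<in> O[at 0](\<lambda>\<gamma>. \<gamma>)) \<and>
     (\<forall>i\<in>{k + 1..k + n}. (\<lambda>\<gamma>. f \<gamma> i - inverse \<gamma> - a i) \<in> O[at 0](\<lambda>\<gamma>. \<gamma>))"
proof -
  have "{1..k + n} = {1..k} \<union> {k + 1..k + n}" by auto
  moreover have "(\<lambda>\<gamma>. f \<gamma> i - tensor_centre k a \<gamma> i) = (\<lambda>\<gamma>. f \<gamma> i - a i)" if "i \<in> {1..k}" for i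
    using that by (simp add: tensor_centre_def)
  moreover have "(\<lambda>\<gamma>. f \<gamma> i - tensor_centre k a \<gamma> i) = (\<lambda>\<gamma>. f \<gamma> i - inverse \<gamma> - a i)"
    if "i \<in> {k + 1..k + n}" for i
    using that by (simp add: tensor_centre_def fun_eq_iff algebra_simps)
  ultimately show ?thesis by (simp add: ball_Un)
qed

lemma tracks_zero_tensor_centre:
  assumes fin: "finite S1" "finite S2"
    and simple1: "\<And>w. w \<in> zeros_phi S1 m z l linf \<Longrightarrow> deriv (phi S1 m z l linf) w \<noteq> 0"
    and simple2: "\<And>w. w \<in> zeros_phi S2 m z l linf \<Longrightarrow> deriv (phi S2 m z l linf) w \<noteq> 0"
    and lab1: "bij_betw \<zeta>0 {1..Mtot S1 m} (zeros_phi S1 m z l linf)"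
    and lab2: "bij_betw \<zeta>0 {Mtot S1 m + 1..Mtot S1 m + Mtot S2 m} (zeros_phi S2 m z l linf)"
    and i: "i \<in> {1..Mtot S1 m + Mtot S2 m}"
  shows "tracks_zero (zeros_tensor S1 S2 m z l linf)
    (\<lambda>\<gamma> w. deriv (phi_tensor S1 S2 m z l linf \<gamma>) w \<noteq> 0) (\<lambda>\<gamma>. tensor_centre (Mtot S1 m) \<zeta>0 \<gamma> i)"
proof (cases "i \<le> Mtot S1 m")
  case True
  with i have "\<zeta>0 i \<in> zeros_phi S1 m z l linf" by (intro bij_betw_apply[OF lab1]) simp
  from tracks_zero_tensor_first[OF fin this simple1[OF this]] True show ?thesis
    by (simp add: tensor_centre_def)
next
  case False
  with i have "\<zeta>0 i \<in> zeros_phi S2 m z l linf" by (intro bij_betw_apply[OF lab2]) simp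
  from tracks_zero_tensor_second[OF fin this simple2[OF this]] False show ?thesis
    by (simp add: tensor_centre_def)
qed

theorem lemmaC2:
  fixes S1 S2 :: "'a set" and m :: "'a \<Rightarrow> nat" and z :: "'a \<Rightarrow> complex"
    and l :: "'a \<Rightarrow> nat \<Rightarrow> complex" and linf :: complex
    and \<zeta>0 :: "nat \<Rightarrow> complex"
  assumes linf: "linf \<noteq> 0"
    and fin: "finite S1" "finite S2"
    and disj: "S1 \<inter> S2 = {}"
    and mpos: "\<And>\<alpha>. \<alpha> \<in> S1 \<union> S2 \<Longrightarrow> m \<alpha> \<ge> 1"
    and zdist: "inj_on z S1" "inj_on z S2"
    and ltop: "\<And>\<alpha>. \<alpha> \<in> S1 \<union> S2 \<Longrightarrow> l \<alpha> (m \<alpha> - 1) \<noteq> 0"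
    and simple1: "\<And>w. w \<in> zeros_phi S1 m z l linf \<Longrightarrow> deriv (phi S1 m z l linf) w \<noteq> 0"
    and simple2: "\<And>w. w \<in> zeros_phi S2 m z l linf \<Longrightarrow> deriv (phi S2 m z l linf) w \<noteq> 0"
    and lab1: "bij_betw \<zeta>0 {1..Mtot S1 m} (zeros_phi S1 m z l linf)"
    and lab2: "bij_betw \<zeta>0 {Mtot S1 m + 1..Mtot S1 m + Mtot S2 m} (zeros_phi S2 m z l linf)"
  shows "\<exists>\<zeta> :: complex \<Rightarrow> nat \<Rightarrow> complex.
    (\<forall>\<^sub>F \<gamma> in at 0.
        bij_betw (\<zeta> \<gamma>) {1..Mtot S1 m + Mtot S2 m} (zeros_tensor S1 S2 m z l linf \<gamma>)
      \<and> (\<forall>w \<in> zeros_tensor S1 S2 m z l linf \<gamma>. deriv (phi_tensor S1 S2 m z l linf \<gamma>) w \<noteq> 0))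
    \<and> (\<forall>i \<in> {1..Mtot S1 m}. (\<lambda>\<gamma>. \<zeta> \<gamma> i - \<zeta>0 i) \<in> O[at 0](\<lambda>\<gamma>. \<gamma>))
    \<and> (\<forall>i \<in> {Mtot S1 m + 1..Mtot S1 m + Mtot S2 m}.
          (\<lambda>\<gamma>. \<zeta> \<gamma> i - inverse \<gamma> - \<zeta>0 i) \<in> O[at 0](\<lambda>\<gamma>. \<gamma>))
    \<and> (\<forall>\<zeta>' :: complex \<Rightarrow> nat \<Rightarrow> complex.
          ((\<forall>\<^sub>F \<gamma> in at 0.
              bij_betw (\<zeta>' \<gamma>) {1..Mtot S1 m + Mtot S2 m} (zeros_tensor S1 S2 m z l linf \<gamma>))
           \<and> (\<forall>i \<in> {1..Mtot S1 m}. (\<lambda>\<gamma>. \<zeta>' \<gamma> i - \<zeta>0 i) \<in> O[at 0](\<lambda>\<gamma>. \<gamma>))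
           \<and> (\<forall>i \<in> {Mtot S1 m + 1..Mtot S1 m + Mtot S2 m}.
                (\<lambda>\<gamma>. \<zeta>' \<gamma> i - inverse \<gamma> - \<zeta>0 i) \<in> O[at 0](\<lambda>\<gamma>. \<gamma>)))
          \<longrightarrow> (\<forall>\<^sub>F \<gamma> in at 0. \<forall>i \<in> {1..Mtot S1 m + Mtot S2 m}. \<zeta>' \<gamma> i = \<zeta> \<gamma> i))"
proof -
  let ?I = "{1..Mtot S1 m + Mtot S2 m}" and ?c = "tensor_centre (Mtot S1 m) \<zeta>0"
  let ?Z = "zeros_tensor S1 S2 m z l linf"
  let ?P = "\<lambda>\<gamma> w. deriv (phi_tensor S1 S2 m z l linf \<gamma>) w \<noteq> 0"
  have sep: "(\<lambda>\<gamma>. \<gamma>) \<in> o[at 0](\<lambda>\<gamma>. ?c \<gamma> i - ?c \<gamma> j)" if "i \<in> ?I" "j \<in> ?I" "i \<noteq> j" for i j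
    using lab1 lab2 that by (intro tensor_centres_separate) (auto dest: bij_betw_imp_inj_on)
  have track: "tracks_zero ?Z ?P (\<lambda>\<gamma>. ?c \<gamma> i)" if "i \<in> ?I" for i
    using fin simple1 simple2 lab1 lab2 that by (rule tracks_zero_tensor_centre)
  have count: "\<forall>\<^sub>F \<gamma> in at 0. finite (?Z \<gamma>) \<and> card (?Z \<gamma>) \<le> card ?I"
    using finite_zeros_tensor[OF fin disj linf] card_zeros_tensor_le[OF fin disj linf] by simp
  obtain \<zeta> where \<zeta>: "\<forall>\<^sub>F \<gamma> in at 0. bij_betw (\<zeta> \<gamma>) ?I (?Z \<gamma>) \<and> (\<forall>w\<in>?Z \<gamma>. ?P \<gamma> w)"
    and close: "\<forall>i\<in>?I. (\<lambda>\<gamma>. \<zeta> \<gamma> i - ?c \<gamma> i) \<in> O[at 0](\<lambda>\<gamma>. \<gamma>)"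
    by (rule tracked_zeros_labelling[where c = ?c and Z = ?Z and P = ?P and I = ?I, OF _ _ _ count])
      (simp_all add: sep track)
  have unique: "\<forall>\<^sub>F \<gamma> in at 0. \<forall>i\<in>?I. \<zeta>' \<gamma> i = \<zeta> \<gamma> i"
    if "\<forall>\<^sub>F \<gamma> in at 0. bij_betw (\<zeta>' \<gamma>) ?I (?Z \<gamma>)"
      and "\<forall>i\<in>?I. (\<lambda>\<gamma>. \<zeta>' \<gamma> i - ?c \<gamma> i) \<in> O[at 0](\<lambda>\<gamma>. \<gamma>)" for \<zeta>'
    using \<zeta> that close
    by (intro tracked_zeros_labelling_unique[where c = ?c and Z = ?Z] finite_atLeastAtMost sep)
      (auto elim: eventually_mono)
  show ?thesis
    using \<zeta> close unique unfolding tensor_centre_bigO_iff by blast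
qed

end
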